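(* Let $G$ be a finite group and $p$ a prime dividing $|G|$. Let $S^{\min}_{G/G}$ be the smallest covering sieve on $G/G$ for the sipp topology on $\mathcal{O}(G)$, viewed as a presheaf of sets on $\mathcal{O}(G)$. Then its restriction to $\mathcal{O}_p(G)$ is a terminal object of $\mathrm{PSh}(\mathcal{O}_p(G))$, and its restriction to $\mathcal{O}^{\circ}_p(G)$ is a terminal object of $\mathrm{PSh}(\mathcal{O}^{\circ}_p(G))$.
   Context: $\mathcal{O}(G)$ is the category of orbits $G/H$ and $G$-maps; $\mathcal{O}_p(G)$ (resp. $\mathcal{O}^{\circ}_p(G)$) its full subcategory on $G/Q$ with $Q$ a $p$-subgroup (resp. non-trivial $p$-subgroup). A sieve on $x$ is a set of morphisms with codomain $x$ closed under precomposition, equivalently a subfunctor of $\mathrm{Hom}(-,x)$. The sipp topology: a sieve on $G/H$ is covering iff it contains the projection $G/P_H\to G/H$ for a Sylow $p$-subgroup $P_H$ of $H$. $\mathrm{PSh}$ denotes presheaves of sets. *)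

theory Defs
  imports "HOL-Algebra.Coset" "HOL-Library.FuncSet" "HOL-Computational_Algebra.Primes"
begin

text \<open>A (small) category given by its object set, hom-sets, composition
  (Comp g f = g after f) and identities.\<close>
record ('o, 'm) cat =
  Ob   :: "'o set"
  Hom  :: "'o \<Rightarrow> 'o \<Rightarrow> 'm set"
  Comp :: "'m \<Rightarrow> 'm \<Rightarrow> 'm"
  Idm  :: "'o \<Rightarrow> 'm"

definition presheaf :: "('o, 'm) cat \<Rightarrow> ('o \<Rightarrow> 'x set) \<Rightarrow> ('m \<Rightarrow> 'x \<Rightarrow> 'x) \<Rightarrow> bool" where
  "presheaf C F0 F1 \<longleftrightarrow>
     (\<forall>a\<in>Ob C. \<forall>b\<in>Ob C. \<forall>f\<in>Hom C a b. F1 f \<in> F0 b \<rightarrow> F0 a) \<and>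
     (\<forall>a\<in>Ob C. \<forall>x\<in>F0 a. F1 (Idm C a) x = x) \<and>
     (\<forall>a\<in>Ob C. \<forall>b\<in>Ob C. \<forall>c\<in>Ob C. \<forall>f\<in>Hom C a b. \<forall>g\<in>Hom C b c. \<forall>x\<in>F0 c.
        F1 (Comp C g f) x = F1 f (F1 g x))"

definition nat_trans ::
  "('o, 'm) cat \<Rightarrow> ('o \<Rightarrow> 'x set) \<Rightarrow> ('m \<Rightarrow> 'x \<Rightarrow> 'x) \<Rightarrow>
   ('o \<Rightarrow> 'y set) \<Rightarrow> ('m \<Rightarrow> 'y \<Rightarrow> 'y) \<Rightarrow> ('o \<Rightarrow> 'x \<Rightarrow> 'y) \<Rightarrow> bool" where
  "nat_trans C X0 X1 Y0 Y1 \<eta> \<longleftrightarrow>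
     (\<forall>a\<in>Ob C. \<eta> a \<in> X0 a \<rightarrow> Y0 a) \<and>
     (\<forall>a\<in>Ob C. \<forall>b\<in>Ob C. \<forall>f\<in>Hom C a b. \<forall>x\<in>X0 b. \<eta> a (X1 f x) = Y1 f (\<eta> b x))"

definition psh_terminal ::
  "'x itself \<Rightarrow> ('o, 'm) cat \<Rightarrow> ('o \<Rightarrow> 't set) \<Rightarrow> ('m \<Rightarrow> 't \<Rightarrow> 't) \<Rightarrow> bool" where
  "psh_terminal _ C T0 T1 \<longleftrightarrow> presheaf C T0 T1 \<and>
     (\<forall>(X0 :: 'o \<Rightarrow> 'x set) X1. presheaf C X0 X1 \<longrightarrow>
        (\<exists>\<eta>. nat_trans C X0 X1 T0 T1 \<eta>) \<and>
        (\<forall>\<eta> \<eta>'. nat_trans C X0 X1 T0 T1 \<eta> \<and> nat_trans C X0 X1 T0 T1 \<eta>' \<longrightarrow>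
            (\<forall>a\<in>Ob C. \<forall>x\<in>X0 a. \<eta> a x = \<eta>' a x)))"

definition lcosets :: "('a, 'b) monoid_scheme \<Rightarrow> 'a set \<Rightarrow> 'a set set" where
  "lcosets G H = (\<Union>a\<in>carrier G. {a <#\<^bsub>G\<^esub> H})"

definition G_map :: "('a, 'b) monoid_scheme \<Rightarrow> 'a set \<Rightarrow> 'a set \<Rightarrow> ('a set \<Rightarrow> 'a set) \<Rightarrow> bool" where
  "G_map G H K f \<longleftrightarrow> f \<in> extensional (lcosets G H) \<and>
     (\<forall>C\<in>lcosets G H. f C \<in> lcosets G K) \<and>
     (\<forall>g\<in>carrier G. \<forall>C\<in>lcosets G H. f (g <#\<^bsub>G\<^esub> C) = g <#\<^bsub>G\<^esub> f C)"

type_synonym 'a orb_mor = "'a set \<times> 'a set \<times> ('a set \<Rightarrow> 'a set)"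

text \<open>A morphism G/H \<rightarrow> G/K is a triple (H, K, f) with f a G-map.\<close>
definition mdom :: "'a orb_mor \<Rightarrow> 'a set" where "mdom m = fst m"
definition mcod :: "'a orb_mor \<Rightarrow> 'a set" where "mcod m = fst (snd m)"

definition orbit_cat_on :: "('a, 'b) monoid_scheme \<Rightarrow> 'a set set \<Rightarrow> ('a set, 'a orb_mor) cat" where
  "orbit_cat_on G Obs =
     \<lparr> Ob = Obs,
       Hom = (\<lambda>H K. {(H, K, f) | f. G_map G H K f}),
       Comp = (\<lambda>(K', L, g) (H, K, f). (H, L, restrict (g \<circ> f) (lcosets G H))),
       Idm = (\<lambda>H. (H, H, restrict id (lcosets G H))) \<rparr>"

definition orbit_cat :: "('a, 'b) monoid_scheme \<Rightarrow> ('a set, 'a orb_mor) cat" where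
  "orbit_cat G = orbit_cat_on G {H. subgroup H G}"

definition p_subgroup :: "('a, 'b) monoid_scheme \<Rightarrow> nat \<Rightarrow> 'a set \<Rightarrow> bool" where
  "p_subgroup G p Q \<longleftrightarrow> subgroup Q G \<and> (\<exists>k. card Q = p ^ k)"

definition orbit_cat_p :: "('a, 'b) monoid_scheme \<Rightarrow> nat \<Rightarrow> ('a set, 'a orb_mor) cat" where
  "orbit_cat_p G p = orbit_cat_on G {Q. p_subgroup G p Q}"

definition orbit_cat_p_circ :: "('a, 'b) monoid_scheme \<Rightarrow> nat \<Rightarrow> ('a set, 'a orb_mor) cat" where
  "orbit_cat_p_circ G p = orbit_cat_on G {Q. p_subgroup G p Q \<and> Q \<noteq> {\<one>\<^bsub>G\<^esub>}}"

definition sieve :: "('o, 'm) cat \<Rightarrow> 'o \<Rightarrow> 'm set \<Rightarrow> bool" where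
  "sieve C x S \<longleftrightarrow>
     S \<subseteq> (\<Union>y\<in>Ob C. Hom C y x) \<and>
     (\<forall>y\<in>Ob C. \<forall>z\<in>Ob C. \<forall>f\<in>Hom C y x. \<forall>\<phi>\<in>Hom C z y. f \<in> S \<longrightarrow> Comp C f \<phi> \<in> S)"

definition sylow_subgroup_of :: "('a, 'b) monoid_scheme \<Rightarrow> nat \<Rightarrow> 'a set \<Rightarrow> 'a set \<Rightarrow> bool" where
  "sylow_subgroup_of G p H P \<longleftrightarrow>
     subgroup P G \<and> P \<subseteq> H \<and> card P = p ^ multiplicity p (card H)"

definition orb_proj :: "('a, 'b) monoid_scheme \<Rightarrow> 'a set \<Rightarrow> 'a set \<Rightarrow> 'a orb_mor" where
  "orb_proj G P H = (P, H, restrict (\<lambda>C. C <#>\<^bsub>G\<^esub> H) (lcosets G P))"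

definition sipp_covering :: "('a, 'b) monoid_scheme \<Rightarrow> nat \<Rightarrow> 'a set \<Rightarrow> 'a orb_mor set \<Rightarrow> bool" where
  "sipp_covering G p H S \<longleftrightarrow> sieve (orbit_cat G) H S \<and>
     (\<exists>P. sylow_subgroup_of G p H P \<and> orb_proj G P H \<in> S)"

definition min_sipp_sieve :: "('a, 'b) monoid_scheme \<Rightarrow> nat \<Rightarrow> 'a set \<Rightarrow> 'a orb_mor set" where
  "min_sipp_sieve G p H =
     (THE S. sipp_covering G p H S \<and> (\<forall>S'. sipp_covering G p H S' \<longrightarrow> S \<subseteq> S'))"

definition sieve_psh0 :: "('o, 'm) cat \<Rightarrow> 'o \<Rightarrow> 'm set \<Rightarrow> 'o \<Rightarrow> 'm set" where
  "sieve_psh0 C x S = (\<lambda>a. S \<inter> Hom C a x)"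

definition sieve_psh1 :: "('o, 'm) cat \<Rightarrow> 'm \<Rightarrow> 'm \<Rightarrow> 'm" where
  "sieve_psh1 C = (\<lambda>\<phi> f. Comp C f \<phi>)"

end

(* The smallest covering sieve on G/G consists of the maps G/Q -> G/G with Q a p-subgroup.
   These form a sieve because a G-map G/H -> G/Q conjugates H into Q.  Every covering sieve
   contains them: it contains G/P -> G/G for a Sylow P, and a p-subgroup Q acting on G/P has
   a fixed point gP (p does not divide [G:P]), so G/Q -> G/G factors as G/Q -> G/P -> G/G
   through the G-map xQ |-> xgP.  As G/G is terminal in O(G), this sieve has exactly one
   element over each p-subgroup, hence restricts to the terminal presheaf on O_p(G) and on
   O_p^circ(G). *)
theory Submission
  imports Defs "HOL-Algebra.Left_Coset" "HOL-Algebra.Group_Action" "HOL-Algebra.Sylow"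
begin

text \<open>The syntax of Left_Coset would shadow the constant lcosets of Defs, which denotes the
  same set.\<close>
no_notation LCOSETS (\<open>(\<open>open_block notation=\<open>prefix lcosets\<close>\<close>lcosets\<index> _)\<close> [81] 80)

lemma lcosets_eq_LCOSETS: "lcosets G H = LCOSETS G H"
  by (simp add: lcosets_def LCOSETS_def)

context group
begin

lemma lcosetsI: "subgroup H G \<Longrightarrow> a \<in> carrier G \<Longrightarrow> a <# H \<in> lcosets G H"
  unfolding lcosets_def by blast

lemma lcosetsE:
  assumes "C \<in> lcosets G H"
  obtains a where "a \<in> carrier G" "C = a <# H"
  using assms unfolding lcosets_def by blast

lemma lcosets_subset_carrier: "subgroup H G \<Longrightarrow> C \<in> lcosets G H \<Longrightarrow> C \<subseteq> carrier G"
  by (simp add: lcosets_eq_LCOSETS subgroup.lcosets_carrier is_group)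

lemma lcos_in_lcosets:
  assumes H: "subgroup H G" and C: "C \<in> lcosets G H" and g: "g \<in> carrier G"
  shows "g <# C \<in> lcosets G H"
proof -
  obtain a where a: "a \<in> carrier G" "C = a <# H" using C by (rule lcosetsE)
  then have "g <# C = (g \<otimes> a) <# H" by (simp add: lcos_m_assoc subgroup.subset[OF H] g)
  then show ?thesis using lcosetsI[OF H] a g by simp
qed

lemma lcosets_carrier_self: "lcosets G (carrier G) = {carrier G}"
  by (auto simp: lcosets_def coset_join3[OF _ subgroup_self])

lemma lcoset_set_mult_carrier:
  assumes "subgroup H G" "C \<in> lcosets G H"
  shows "C <#> carrier G = carrier G"
proof
  show "C <#> carrier G \<subseteq> carrier G"
    using assms by (simp add: setmult_subset_G lcosets_subset_carrier)
  obtain a where a: "a \<in> carrier G" "C = a <# H" using assms(2) by (rule lcosetsE)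
  show "carrier G \<subseteq> C <#> carrier G"
  proof
    fix x assume x: "x \<in> carrier G"
    have "x = a \<otimes> (inv a \<otimes> x)" using a x by (simp add: m_assoc[symmetric])
    then show "x \<in> C <#> carrier G"
      using a x lcos_self[OF a(1) assms(1)] by (auto simp: set_mult_def)
  qed
qed

lemma card_lcosets:
  "finite (carrier G) \<Longrightarrow> subgroup H G \<Longrightarrow> card (lcosets G H) * card H = order G"
  by (simp add: lcosets_eq_LCOSETS l_lagrange)

lemma lcosets_action:
  assumes H: "subgroup H G"
  shows "group_action G (lcosets G H) (\<lambda>g. \<lambda>C \<in> lcosets G H. g <# C)"
proof -
  let ?E = "lcosets G H" and ?\<phi> = "\<lambda>g. \<lambda>C \<in> lcosets G H. g <# C"
  have cancel: "inv g <# (g <# C) = C" if "g \<in> carrier G" "C \<in> ?E" for g C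
    using that lcosets_subset_carrier[OF H] by (simp add: lcos_m_assoc lcos_mult_one)
  have bij: "?\<phi> g \<in> Bij ?E" if g: "g \<in> carrier G" for g
  proof -
    have "inj_on (?\<phi> g) ?E"
      by (rule inj_onI) (metis restrict_apply' cancel g)
    moreover have "?\<phi> g ` ?E = ?E"
    proof
      show "?\<phi> g ` ?E \<subseteq> ?E" using lcos_in_lcosets[OF H] g by auto
      show "?E \<subseteq> ?\<phi> g ` ?E"
      proof
        fix C assume C: "C \<in> ?E"
        have "inv g <# C \<in> ?E" and "C = ?\<phi> g (inv g <# C)"
          using lcos_in_lcosets[OF H C] cancel[of "inv g" C] g C by simp_all
        then show "C \<in> ?\<phi> g ` ?E" by blast
      qed
    qed
    ultimately show ?thesis by (simp add: Bij_def bij_betw_def)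
  qed
  have "?\<phi> \<in> hom G (BijGroup ?E)"
  proof (rule homI)
    show "?\<phi> g \<in> carrier (BijGroup ?E)" if "g \<in> carrier G" for g
      using bij that by (simp add: BijGroup_def)
    show "?\<phi> (g \<otimes> h) = ?\<phi> g \<otimes>\<^bsub>BijGroup ?E\<^esub> ?\<phi> h"
      if g: "g \<in> carrier G" and h: "h \<in> carrier G" for g h
      using bij[OF g] bij[OF h] g h lcos_in_lcosets[OF H]
      by (auto simp: BijGroup_def compose_def lcos_m_assoc lcosets_subset_carrier[OF H] intro!: ext)
  qed
  then show ?thesis
    by (simp add: group_action_def group_hom_def group_hom_axioms_def group_BijGroup is_group)
qed

end

lemma (in group_action) p_group_action_fixed_point:
  assumes p: "prime p" and order: "order G = p ^ n"
    and fin: "finite E" and not_dvd: "\<not> p dvd card E"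
  shows "\<exists>x\<in>E. \<forall>g\<in>carrier G. \<phi> g x = x"
proof (rule ccontr)
  assume no_fixed: "\<not> ?thesis"
  have "p dvd card (orbit G \<phi> x)" if x: "x \<in> E" for x
  proof -
    have "card (orbit G \<phi> x) dvd p ^ n"
      using orbit_stabilizer_theorem[OF x] order by (metis dvd_triv_left)
    then obtain i where i: "card (orbit G \<phi> x) = p ^ i"
      using divides_primepow_nat[OF p] by blast
    have "i \<noteq> 0"
    proof
      assume "i = 0"
      with i orbit_refl[OF x] have "orbit G \<phi> x = {x}"
        by (metis card_1_singletonE power_0 singletonD)
      then show False
        using no_fixed x by (auto simp: orbit_def)
    qed
    then show ?thesis using i by (simp add: dvd_power)
  qed
  then have "p dvd (\<Sum>orb\<in>orbits G E \<phi>. card orb)"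
    by (auto simp: orbits_def intro!: dvd_sum)
  moreover have "(\<Sum>orb\<in>orbits G E \<phi>. card orb) = card E"
    using disjoint_sum[OF fin, of "\<lambda>_. 1::nat"] by simp
  ultimately show False using not_dvd by simp
qed

context group
begin

lemma p_subgroup_fixes_lcoset_of_Sylow:
  assumes fin: "finite (carrier G)" and p: "prime p"
    and P: "subgroup P G" and card_P: "card P = p ^ multiplicity p (order G)"
    and K: "subgroup K G" and card_K: "card K = p ^ j"
  shows "\<exists>C\<in>lcosets G P. \<forall>k\<in>K. k <# C = C"
proof -
  interpret K_action: group_action "G\<lparr>carrier := K\<rparr>" "lcosets G P" "\<lambda>g. \<lambda>C \<in> lcosets G P. g <# C"
    using group_action.induced_action[OF lcosets_action[OF P] K] .
  have "\<not> p dvd card (lcosets G P)"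
  proof
    assume "p dvd card (lcosets G P)"
    then have "p ^ Suc (multiplicity p (order G)) dvd order G"
      using card_lcosets[OF fin P] card_P by (metis mult_dvd_mono dvd_refl power_Suc)
    moreover have "order G \<noteq> 0" using fin order_gt_0_iff_finite by auto
    ultimately show False
      using p power_dvd_iff_le_multiplicity by (metis Suc_n_not_le_n not_prime_unit)
  qed
  moreover have "finite (lcosets G P)" using fin by (simp add: lcosets_def)
  ultimately show ?thesis
    using K_action.p_group_action_fixed_point[OF p] card_K by (auto simp: order_def)
qed

lemma card_subgroup_dvd:
  assumes I: "subgroup I G" and J: "subgroup J G" and "I \<subseteq> J"
  shows "card I dvd card J"
proof -
  have "card (rcosets\<^bsub>G\<lparr>carrier := J\<rparr>\<^esub> I) * card I = order (G\<lparr>carrier := J\<rparr>)"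
    using group.lagrange[OF subgroup_imp_group[OF J] subgroup_incl[OF I J]] assms(3) .
  then show ?thesis by (simp add: order_def) (metis dvd_triv_right)
qed

lemma card_conjugate:
  assumes c: "c \<in> carrier G" and H: "H \<subseteq> carrier G"
  shows "card (inv c <# H #> c) = card H"
proof -
  have "inv c <# H #> c = (\<lambda>h. inv c \<otimes> h \<otimes> c) ` H"
    by (auto simp: l_coset_def r_coset_def)
  moreover have "inj_on (\<lambda>h. inv c \<otimes> h \<otimes> c) H"
    using c H by (intro inj_onI) (simp add: subset_iff)
  ultimately show ?thesis by (simp add: card_image)
qed

lemma G_map_subconjugate:
  assumes H: "subgroup H G" and K: "subgroup K G" and f: "G_map G H K f"
  shows "\<exists>c\<in>carrier G. inv c <# H #> c \<subseteq> K"
proof -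
  have H_in: "H \<in> lcosets G H"
    using lcosetsI[OF H one_closed] lcos_mult_one[OF subgroup.subset[OF H]] by simp
  then have "f H \<in> lcosets G K" using f by (auto simp: G_map_def)
  then obtain c where c: "c \<in> carrier G" "f H = c <# K" by (rule lcosetsE)
  have "inv c \<otimes> h \<otimes> c \<in> K" if h: "h \<in> H" for h
  proof -
    have hc: "h \<in> carrier G" using subgroup.mem_carrier[OF H h] .
    have "h <# f H = f (h <# H)"
      using f hc H_in unfolding G_map_def by simp
    then have "c <# K = h <# (c <# K)"
      using coset_join3[OF hc H h] c(2) by simp
    also have "\<dots> = (h \<otimes> c) <# K" using lcos_m_assoc subgroup.subset[OF K] hc c(1) by simp
    finally have "h \<otimes> c \<in> c <# K"
      using lcos_self[OF m_closed[OF hc c(1)] K] by simp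
    then show ?thesis
      using subgroup.lcos_module_imp[OF K is_group c(1)] hc c(1) by (simp add: m_assoc)
  qed
  then show ?thesis using c(1) by (auto simp: l_coset_def r_coset_def)
qed

lemma G_map_p_subgroup:
  assumes p: "prime p" and H: "subgroup H G" and K: "p_subgroup G p K" and f: "G_map G H K f"
  shows "p_subgroup G p H"
proof -
  obtain k where K_sub: "subgroup K G" and card_K: "card K = p ^ k"
    using K by (auto simp: p_subgroup_def)
  obtain c where c: "c \<in> carrier G" and conj: "inv c <# H #> c \<subseteq> K"
    using G_map_subconjugate[OF H K_sub f] by blast
  have "card H dvd card K"
    using card_subgroup_dvd[OF subgroup_conjugation_is_surj1[OF c H] K_sub conj]
      card_conjugate[OF c subgroup.subset[OF H]] by simp
  then show ?thesis
    using H card_K divides_primepow_nat[OF p] by (auto simp: p_subgroup_def)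
qed

lemma G_map_to_fixed_lcoset:
  assumes K: "subgroup K G" and P: "subgroup P G"
    and C0: "C0 \<in> lcosets G P" and fixed: "\<forall>k\<in>K. k <# C0 = C0"
  shows "G_map G K P (\<lambda>C \<in> lcosets G K. C <#> C0)"
proof -
  have C0_sub: "C0 \<subseteq> carrier G" using lcosets_subset_carrier[OF P C0] .
  have K_C0: "K <#> C0 = C0"
  proof
    show "K <#> C0 \<subseteq> C0"
    proof
      fix u assume "u \<in> K <#> C0"
      then obtain k v where "k \<in> K" "v \<in> C0" "u = k \<otimes> v" by (auto simp: set_mult_def)
      then have "u \<in> k <# C0" by (auto simp: l_coset_def)
      then show "u \<in> C0" using fixed \<open>k \<in> K\<close> by simp
    qed
    show "C0 \<subseteq> K <#> C0"
    proof
      fix v assume v: "v \<in> C0"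
      then have "v = \<one> \<otimes> v" using C0_sub by auto
      then show "v \<in> K <#> C0"
        using v subgroup.one_closed[OF K] unfolding set_mult_def by blast
    qed
  qed
  have image: "C <#> C0 = a <# C0" if "a \<in> carrier G" "C = a <# K" for C a
    using that setmult_lcos_assoc[OF subgroup.subset[OF K] C0_sub] K_C0 by simp
  show ?thesis
    unfolding G_map_def
  proof (intro conjI ballI)
    fix C assume C: "C \<in> lcosets G K"
    then obtain a where a: "a \<in> carrier G" "C = a <# K" by (rule lcosetsE)
    show "(\<lambda>C \<in> lcosets G K. C <#> C0) C \<in> lcosets G P"
      using C image[OF a] lcos_in_lcosets[OF P C0 a(1)] by simp
    fix g assume g: "g \<in> carrier G"
    have gC: "g <# C = (g \<otimes> a) <# K"
      using a g lcos_m_assoc[OF subgroup.subset[OF K]] by simp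
    have "(g <# C) <#> C0 = (g \<otimes> a) <# C0"
      using image[OF _ gC] g a(1) by simp
    also have "\<dots> = g <# (C <#> C0)"
      using image[OF a] lcos_m_assoc[OF C0_sub g a(1)] by simp
    finally show "(\<lambda>C \<in> lcosets G K. C <#> C0) (g <# C) = g <# (\<lambda>C \<in> lcosets G K. C <#> C0) C"
      using C lcos_in_lcosets[OF K C g] by simp
  qed simp
qed

end

lemma psh_terminal_if_singleton:
  assumes Idm_Hom: "\<And>a. a \<in> Ob C \<Longrightarrow> Idm C a \<in> Hom C a a"
    and Comp_Hom: "\<And>a b c f g. a \<in> Ob C \<Longrightarrow> b \<in> Ob C \<Longrightarrow> c \<in> Ob C \<Longrightarrow>
      f \<in> Hom C a b \<Longrightarrow> g \<in> Hom C b c \<Longrightarrow> Comp C g f \<in> Hom C a c"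
    and singleton: "\<And>a. a \<in> Ob C \<Longrightarrow> T0 a = {t a}"
    and restrict_point: "\<And>a b f. a \<in> Ob C \<Longrightarrow> b \<in> Ob C \<Longrightarrow> f \<in> Hom C a b \<Longrightarrow> T1 f (t b) = t a"
  shows "psh_terminal TYPE('x) C T0 T1"
  unfolding psh_terminal_def
proof (intro conjI allI impI)
  show "presheaf C T0 T1"
    unfolding presheaf_def
  proof (intro conjI ballI)
    show "T1 f \<in> T0 b \<rightarrow> T0 a" if "a \<in> Ob C" "b \<in> Ob C" "f \<in> Hom C a b" for a b f
      using that singleton restrict_point by simp
    show "T1 (Idm C a) x = x" if "a \<in> Ob C" "x \<in> T0 a" for a x
      using that singleton restrict_point Idm_Hom by simp
    show "T1 (Comp C g f) x = T1 f (T1 g x)"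
      if "a \<in> Ob C" "b \<in> Ob C" "c \<in> Ob C" "f \<in> Hom C a b" "g \<in> Hom C b c" "x \<in> T0 c"
      for a b c f g x
      using that singleton restrict_point Comp_Hom by simp
  qed
  fix X0 :: "'a \<Rightarrow> 'x set" and X1
  show "\<exists>\<eta>. nat_trans C X0 X1 T0 T1 \<eta>"
    by (rule exI[of _ "\<lambda>a _. t a"]) (simp add: nat_trans_def singleton restrict_point)
  show "\<forall>a\<in>Ob C. \<forall>x\<in>X0 a. \<eta> a x = \<eta>' a x"
    if "nat_trans C X0 X1 T0 T1 \<eta> \<and> nat_trans C X0 X1 T0 T1 \<eta>'" for \<eta> \<eta>'
  proof (intro ballI)
    fix a x assume "a \<in> Ob C" "x \<in> X0 a"
    then have "\<eta> a x \<in> T0 a" "\<eta>' a x \<in> T0 a"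
      using that unfolding nat_trans_def by (blast intro: funcset_mem)+
    then show "\<eta> a x = \<eta>' a x" using singleton \<open>a \<in> Ob C\<close> by simp
  qed
qed

lemma orbit_cat_on_simps:
  "Ob (orbit_cat_on G Obs) = Obs"
  "Hom (orbit_cat_on G Obs) H K = {(H, K, f) | f. G_map G H K f}"
  "Comp (orbit_cat_on G Obs) (K', L, g) (H, K, f) = (H, L, restrict (g \<circ> f) (lcosets G H))"
  "Idm (orbit_cat_on G Obs) H = (H, H, restrict id (lcosets G H))"
  by (simp_all add: orbit_cat_on_def)

lemma orbit_cat_on_Idm_Hom:
  assumes "group G" "subgroup H G"
  shows "Idm (orbit_cat_on G Obs) H \<in> Hom (orbit_cat_on G Obs) H H"
  using group.lcos_in_lcosets[OF assms] by (auto simp: orbit_cat_on_simps G_map_def)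

lemma orbit_cat_on_Comp_Hom:
  assumes G: "group G" and H: "subgroup H G"
    and f: "f \<in> Hom (orbit_cat_on G Obs) H K" and g: "g \<in> Hom (orbit_cat_on G Obs) K L"
  shows "Comp (orbit_cat_on G Obs) g f \<in> Hom (orbit_cat_on G Obs) H L"
proof -
  obtain f' g' where fg: "f = (H, K, f')" "g = (K, L, g')" and "G_map G H K f'" "G_map G K L g'"
    using f g by (auto simp: orbit_cat_on_simps)
  then show ?thesis
    using group.lcos_in_lcosets[OF G H] by (auto simp: orbit_cat_on_simps G_map_def)
qed

definition orb_collapse :: "('a, 'b) monoid_scheme \<Rightarrow> 'a set \<Rightarrow> 'a orb_mor" where
  "orb_collapse G K = (K, carrier G, \<lambda>C \<in> lcosets G K. carrier G)"

lemma Hom_orbit_cat_on_carrier: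
  assumes G: "group G" and K: "subgroup K G"
  shows "Hom (orbit_cat_on G Obs) K (carrier G) = {orb_collapse G K}"
proof -
  have "G_map G K (carrier G) f \<longleftrightarrow> f = (\<lambda>C \<in> lcosets G K. carrier G)" for f
  proof
    show "f = (\<lambda>C \<in> lcosets G K. carrier G)" if "G_map G K (carrier G) f"
      using that group.lcosets_carrier_self[OF G]
      by (intro extensionalityI[of _ "lcosets G K"]) (auto simp: G_map_def)
    show "G_map G K (carrier G) f" if "f = (\<lambda>C \<in> lcosets G K. carrier G)"
      using that group.lcosets_carrier_self[OF G] group.lcos_in_lcosets[OF G K]
      by (simp add: G_map_def group.coset_join3[OF G _ group.subgroup_self[OF G]])
  qed
  then show ?thesis by (auto simp: orbit_cat_on_simps orb_collapse_def)
qed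

lemma Comp_orb_collapse:
  assumes "G_map G H K f"
  shows "Comp (orbit_cat_on G Obs) (orb_collapse G K) (H, K, f) = orb_collapse G H"
  using assms by (auto simp: orbit_cat_on_simps orb_collapse_def G_map_def intro!: restrict_ext)

lemma orb_proj_carrier:
  assumes "group G" "subgroup P G"
  shows "orb_proj G P (carrier G) = orb_collapse G P"
  using group.lcoset_set_mult_carrier[OF assms] by (simp add: orb_proj_def orb_collapse_def cong: restrict_cong)

definition p_orbit_sieve :: "('a, 'b) monoid_scheme \<Rightarrow> nat \<Rightarrow> 'a orb_mor set" where
  "p_orbit_sieve G p = orb_collapse G ` {Q. p_subgroup G p Q}"

lemma sieve_p_orbit_sieve:
  assumes G: "group G" and p: "prime p"
  shows "sieve (orbit_cat G) (carrier G) (p_orbit_sieve G p)"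
  unfolding sieve_def
proof (intro conjI ballI impI)
  show "p_orbit_sieve G p \<subseteq> (\<Union>H\<in>Ob (orbit_cat G). Hom (orbit_cat G) H (carrier G))"
    using Hom_orbit_cat_on_carrier[OF G]
    by (force simp: p_orbit_sieve_def orbit_cat_def orbit_cat_on_simps p_subgroup_def)
  fix H K f \<phi>
  assume K: "K \<in> Ob (orbit_cat G)" and H: "H \<in> Ob (orbit_cat G)"
    and f: "f \<in> Hom (orbit_cat G) K (carrier G)" and \<phi>: "\<phi> \<in> Hom (orbit_cat G) H K"
    and f_in: "f \<in> p_orbit_sieve G p"
  have "f = orb_collapse G K"
    using Hom_orbit_cat_on_carrier[OF G] f K by (auto simp: orbit_cat_def orbit_cat_on_simps)
  then have K_p: "p_subgroup G p K"
    using f_in by (auto simp: p_orbit_sieve_def orb_collapse_def)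
  obtain \<psi> where \<psi>: "\<phi> = (H, K, \<psi>)" "G_map G H K \<psi>"
    using \<phi> by (auto simp: orbit_cat_def orbit_cat_on_simps)
  then have "p_subgroup G p H"
    using group.G_map_p_subgroup[OF G p _ K_p] H by (auto simp: orbit_cat_def orbit_cat_on_simps)
  moreover have "Comp (orbit_cat G) f \<phi> = orb_collapse G H"
    using Comp_orb_collapse[OF \<psi>(2)] \<psi>(1) \<open>f = orb_collapse G K\<close> by (simp add: orbit_cat_def)
  ultimately show "Comp (orbit_cat G) f \<phi> \<in> p_orbit_sieve G p"
    by (simp add: p_orbit_sieve_def)
qed

lemma sipp_covering_p_orbit_sieve:
  assumes G: "group G" and fin: "finite (carrier G)" and p: "prime p"
  shows "sipp_covering G p (carrier G) (p_orbit_sieve G p)"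
proof -
  obtain m where "order G = p ^ multiplicity p (order G) * m"
    using multiplicity_dvd by blast
  then obtain P where P: "subgroup P G" "card P = p ^ multiplicity p (order G)"
    using sylow_thm[OF p G _ fin] by blast
  then have "sylow_subgroup_of G p (carrier G) P"
    by (simp add: sylow_subgroup_of_def subgroup.subset order_def)
  moreover have "orb_proj G P (carrier G) \<in> p_orbit_sieve G p"
    using P orb_proj_carrier[OF G P(1)] by (auto simp: p_orbit_sieve_def p_subgroup_def)
  ultimately show ?thesis
    using sieve_p_orbit_sieve[OF G p] by (auto simp: sipp_covering_def)
qed

lemma p_orbit_sieve_subset_covering:
  assumes G: "group G" and fin: "finite (carrier G)" and p: "prime p"
    and S: "sipp_covering G p (carrier G) S"
  shows "p_orbit_sieve G p \<subseteq> S"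
proof
  fix f assume "f \<in> p_orbit_sieve G p"
  then obtain K j where K: "subgroup K G" "card K = p ^ j" and f: "f = orb_collapse G K"
    by (auto simp: p_orbit_sieve_def p_subgroup_def)
  obtain P where P: "sylow_subgroup_of G p (carrier G) P" "orb_proj G P (carrier G) \<in> S"
    and sieve: "sieve (orbit_cat G) (carrier G) S"
    using S by (auto simp: sipp_covering_def)
  have P_sub: "subgroup P G" and card_P: "card P = p ^ multiplicity p (order G)"
    using P(1) by (auto simp: sylow_subgroup_of_def order_def)
  obtain C where "C \<in> lcosets G P" "\<forall>k\<in>K. k <#\<^bsub>G\<^esub> C = C"
    using group.p_subgroup_fixes_lcoset_of_Sylow[OF G fin p P_sub card_P K] by blast
  then have G_map: "G_map G K P (\<lambda>D \<in> lcosets G K. D <#>\<^bsub>G\<^esub> C)"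
    using group.G_map_to_fixed_lcoset[OF G K(1) P_sub] by blast
  then have \<psi>: "(K, P, \<lambda>D \<in> lcosets G K. D <#>\<^bsub>G\<^esub> C) \<in> Hom (orbit_cat G) K P"
    by (simp add: orbit_cat_def orbit_cat_on_simps)
  have "orb_proj G P (carrier G) \<in> Hom (orbit_cat G) P (carrier G)"
    using Hom_orbit_cat_on_carrier[OF G P_sub] orb_proj_carrier[OF G P_sub] by (simp add: orbit_cat_def)
  then have "Comp (orbit_cat G) (orb_proj G P (carrier G)) (K, P, \<lambda>D \<in> lcosets G K. D <#>\<^bsub>G\<^esub> C) \<in> S"
    using sieve \<psi> P(2) P_sub K(1) group.subgroup_self[OF G]
    unfolding sieve_def by (auto simp: orbit_cat_def orbit_cat_on_simps)
  then show "f \<in> S"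
    using Comp_orb_collapse[OF G_map] orb_proj_carrier[OF G P_sub] f
    by (simp add: orbit_cat_def)
qed

lemma min_sipp_sieve_carrier:
  assumes "group G" "finite (carrier G)" "prime p"
  shows "min_sipp_sieve G p (carrier G) = p_orbit_sieve G p"
  unfolding min_sipp_sieve_def
  using sipp_covering_p_orbit_sieve[OF assms] p_orbit_sieve_subset_covering[OF assms]
  by (intro the_equality) auto

lemma sieve_psh0_p_orbit_sieve:
  assumes G: "group G" and Q: "p_subgroup G p Q"
  shows "sieve_psh0 (orbit_cat G) (carrier G) (p_orbit_sieve G p) Q = {orb_collapse G Q}"
  using Q Hom_orbit_cat_on_carrier[OF G, of Q "{H. subgroup H G}"]
  by (auto simp: sieve_psh0_def p_orbit_sieve_def orbit_cat_def p_subgroup_def)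

lemma psh_terminal_p_orbit_sieve:
  assumes G: "group G" and Obs: "Obs \<subseteq> {Q. p_subgroup G p Q}"
  shows "psh_terminal TYPE('x) (orbit_cat_on G Obs)
           (sieve_psh0 (orbit_cat G) (carrier G) (p_orbit_sieve G p)) (sieve_psh1 (orbit_cat G))"
proof (rule psh_terminal_if_singleton)
  have subgroup: "subgroup H G" if "H \<in> Ob (orbit_cat_on G Obs)" for H
    using that Obs by (auto simp: orbit_cat_on_simps p_subgroup_def)
  show "Idm (orbit_cat_on G Obs) H \<in> Hom (orbit_cat_on G Obs) H H"
    if "H \<in> Ob (orbit_cat_on G Obs)" for H
    using orbit_cat_on_Idm_Hom[OF G subgroup[OF that]] .
  show "Comp (orbit_cat_on G Obs) g f \<in> Hom (orbit_cat_on G Obs) H L"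
    if "H \<in> Ob (orbit_cat_on G Obs)" "f \<in> Hom (orbit_cat_on G Obs) H K"
      "g \<in> Hom (orbit_cat_on G Obs) K L" for H K L f g
    using orbit_cat_on_Comp_Hom[OF G subgroup] that by blast
  show "sieve_psh0 (orbit_cat G) (carrier G) (p_orbit_sieve G p) H = {orb_collapse G H}"
    if "H \<in> Ob (orbit_cat_on G Obs)" for H
    using sieve_psh0_p_orbit_sieve[OF G] that Obs by (auto simp: orbit_cat_on_simps)
  show "sieve_psh1 (orbit_cat G) f (orb_collapse G K) = orb_collapse G H"
    if "f \<in> Hom (orbit_cat_on G Obs) H K" for H K f
    using Comp_orb_collapse that by (auto simp: sieve_psh1_def orbit_cat_def orbit_cat_on_simps)
qed

theorem lemma4p4p1:
  fixes G :: "('a, 'b) monoid_scheme" and p :: nat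
  assumes "group G" and "finite (carrier G)" and "prime p" and "p dvd order G"
  shows "psh_terminal TYPE('x) (orbit_cat_p G p)
           (sieve_psh0 (orbit_cat G) (carrier G) (min_sipp_sieve G p (carrier G)))
           (sieve_psh1 (orbit_cat G))
       \<and> psh_terminal TYPE('x) (orbit_cat_p_circ G p)
           (sieve_psh0 (orbit_cat G) (carrier G) (min_sipp_sieve G p (carrier G)))
           (sieve_psh1 (orbit_cat G))"
  unfolding min_sipp_sieve_carrier[OF assms(1-3)] orbit_cat_p_def orbit_cat_p_circ_def
  by (intro conjI psh_terminal_p_orbit_sieve[OF assms(1)]) auto

end
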